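(* Let $G\in\mathbb{R}^{n\times n}$ be symmetric positive semidefinite. Let $S$ be a random matrix with a finite discrete distribution, $S=S_i\in\mathbb{R}^{n\times q_i}$ with probability $p_i>0$ for $i=1,\dots,r$, and let $\mathbb{S}\eqdef[S_1,\dots,S_r]\in\mathbb{R}^{n\times\sum_i q_i}$. If $$p_i=\frac{\mathrm{Tr}(S_i^\top G^2 S_i)}{\mathrm{Tr}(\mathbb{S}^\top G^2\mathbb{S})},\qquad i=1,\dots,r,$$ then $$\lambda_{\min}^+\Big(G\,\mathbb{E}\big[S(S^\top G^2 S)^\dagger S^\top\big]\,G\Big)\ \ge\ \frac{\lambda_{\min}^+(\mathbb{S}^\top G^2\mathbb{S})}{\mathrm{Tr}(\mathbb{S}^\top G^2\mathbb{S})}.$$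
   Context: $M^\dagger$ is the Moore–Penrose pseudoinverse; $\lambda_{\min}^+(M)$ is the smallest nonzero eigenvalue of a symmetric positive semidefinite matrix $M$. *)

theory Defs
  imports "Jordan_Normal_Form.Matrix" "Jordan_Normal_Form.Char_Poly"
begin

definition mat_trace :: "'a :: comm_monoid_add mat \<Rightarrow> 'a" where
  "mat_trace A = (\<Sum>i<dim_row A. A $$ (i, i))"

definition sym_psd :: "nat \<Rightarrow> real mat \<Rightarrow> bool" where
  "sym_psd n A \<longleftrightarrow> A \<in> carrier_mat n n \<and> transpose_mat A = A \<and>
     (\<forall>v \<in> carrier_vec n. v \<bullet> (A *\<^sub>v v) \<ge> 0)"

definition pinv :: "real mat \<Rightarrow> real mat" where
  "pinv A = (THE X. X \<in> carrier_mat (dim_col A) (dim_row A) \<and>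
       A * X * A = A \<and> X * A * X = X \<and>
       transpose_mat (A * X) = A * X \<and> transpose_mat (X * A) = X * A)"

definition lambda_min_plus :: "real mat \<Rightarrow> real" where
  "lambda_min_plus M = Min {k. eigenvalue M k \<and> k \<noteq> 0}"

definition append_cols :: "'a mat \<Rightarrow> 'a mat \<Rightarrow> 'a mat" where
  "append_cols A B = mat (dim_row A) (dim_col A + dim_col B)
     (\<lambda>(i, j). if j < dim_col A then A $$ (i, j) else B $$ (i, j - dim_col A))"

(* [S_0, ..., S_{r-1}], each S_i having n rows *)
fun hcat :: "nat \<Rightarrow> (nat \<Rightarrow> 'a :: zero mat) \<Rightarrow> nat \<Rightarrow> 'a mat" where
  "hcat n S 0 = 0\<^sub>m n 0"
| "hcat n S (Suc r) = append_cols (hcat n S r) (S r)"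

definition wsum_mat :: "nat \<Rightarrow> nat \<Rightarrow> 'b set \<Rightarrow> ('b \<Rightarrow> real) \<Rightarrow> ('b \<Rightarrow> real mat) \<Rightarrow> real mat" where
  "wsum_mat n m I w M = mat n m (\<lambda>(j, k). \<Sum>i\<in>I. w i * M i $$ (j, k))"

end

theory Submission
  imports Defs
begin

text \<open>Put \<open>C\<^sub>i = G S\<^sub>i\<close> and \<open>C = [C\<^sub>1, \<dots>, C\<^sub>r] = G [S\<^sub>1, \<dots>, S\<^sub>r]\<close>, so that the claim reads
  \<open>\<lambda>\<^sup>+(L) \<ge> \<lambda>\<^sup>+(C\<^sup>T C) / tr (C\<^sup>T C)\<close> for \<open>L = \<Sum>\<^sub>i p\<^sub>i C\<^sub>i (C\<^sub>i\<^sup>T C\<^sub>i)\<^sup>\<dagger> C\<^sub>i\<^sup>T\<close>.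
  On the range of a positive semidefinite \<open>B\<close> one has \<open>\<parallel>z\<parallel>\<^sup>2 \<le> tr B \<cdot> z\<^sup>T B\<^sup>\<dagger> z\<close>; with
  \<open>p\<^sub>i = tr (C\<^sub>i\<^sup>T C\<^sub>i) / tr (C\<^sup>T C)\<close> and \<open>z = C\<^sub>i\<^sup>T v\<close> this sums to \<open>C C\<^sup>T \<preceq> tr (C\<^sup>T C) \<cdot> L\<close>,
  and \<open>L\<close> vanishes on \<open>ker C\<^sup>T\<close>. An eigenvector of \<open>L\<close> for a nonzero eigenvalue \<open>\<mu>\<close> is thus
  orthogonal to \<open>ker (C C\<^sup>T)\<close>, where the Rayleigh quotient of \<open>C C\<^sup>T\<close> is at least
  \<open>\<lambda>\<^sup>+(C C\<^sup>T) = \<lambda>\<^sup>+(C\<^sup>T C)\<close>, which gives \<open>\<mu> \<ge> \<lambda>\<^sup>+(C\<^sup>T C) / tr (C\<^sup>T C)\<close>. The spectral facts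
  used along the way rest on the spectral theorem for real symmetric matrices, proved by
  deflation with Householder reflections.\<close>

section \<open>The spectral theorem for real symmetric matrices\<close>

lemma conjugate_real_vec [simp]: "conjugate (v :: real vec) = v"
  by (intro eq_vecI) auto

lemma scalar_prod_self_nonneg: "0 \<le> (v :: real vec) \<bullet> v"
  using conjugate_square_ge_0_vec[of v] by simp

lemma scalar_prod_self_eq_0_iff:
  "(v :: real vec) \<in> carrier_vec n \<Longrightarrow> v \<bullet> v = 0 \<longleftrightarrow> v = 0\<^sub>v n"
  using conjugate_square_eq_0_vec[of v n] by simp

lemma scalar_prod_self_pos:
  "(v :: real vec) \<in> carrier_vec n \<Longrightarrow> v \<noteq> 0\<^sub>v n \<Longrightarrow> 0 < v \<bullet> v"
  using scalar_prod_self_nonneg[of v] scalar_prod_self_eq_0_iff[of v n] by linarith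

lemma mult_mat_vec_zero [simp]:
  "A \<in> carrier_mat n m \<Longrightarrow> A *\<^sub>v 0\<^sub>v m = (0\<^sub>v n :: 'a :: semiring_0 vec)"
  by (intro eq_vecI) auto

lemma sym_mat_scalar_prod_swap:
  fixes K :: "'a :: comm_semiring_0 mat"
  assumes "K \<in> carrier_mat n n" "transpose_mat K = K" "x \<in> carrier_vec n" "y \<in> carrier_vec n"
  shows "x \<bullet> (K *\<^sub>v y) = (K *\<^sub>v x) \<bullet> y"
  using transpose_vec_mult_scalar[of K n n y x] assms by simp

lemma sym_mat_no_rotation:
  fixes K :: "real mat"
  assumes K: "K \<in> carrier_mat n n" and sym: "transpose_mat K = K"
    and x: "x \<in> carrier_vec n" and y: "y \<in> carrier_vec n"
    and Kx: "K *\<^sub>v x = a \<cdot>\<^sub>v x - b \<cdot>\<^sub>v y" and Ky: "K *\<^sub>v y = b \<cdot>\<^sub>v x + a \<cdot>\<^sub>v y"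
    and nz: "x \<noteq> 0\<^sub>v n \<or> y \<noteq> 0\<^sub>v n"
  shows "b = 0"
proof -
  have "y \<bullet> (K *\<^sub>v x) = a * (y \<bullet> x) - b * (y \<bullet> y)"
    unfolding Kx using x y by (simp add: scalar_prod_minus_distrib[of y n])
  moreover have "(K *\<^sub>v y) \<bullet> x = b * (x \<bullet> x) + a * (y \<bullet> x)"
    unfolding Ky using x y by (simp add: add_scalar_prod_distrib[of _ n])
  moreover have "y \<bullet> (K *\<^sub>v x) = (K *\<^sub>v y) \<bullet> x"
    by (rule sym_mat_scalar_prod_swap[OF K sym y x])
  ultimately have "b * (x \<bullet> x + y \<bullet> y) = 0"
    by (simp add: algebra_simps)
  moreover have "0 < x \<bullet> x + y \<bullet> y"
    using nz scalar_prod_self_pos[OF x] scalar_prod_self_pos[OF y]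
      scalar_prod_self_nonneg[of x] scalar_prod_self_nonneg[of y] by fastforce
  ultimately show ?thesis by simp
qed

lemma complex_eigenvector_parts:
  fixes K :: "real mat"
  assumes K: "K \<in> carrier_mat n n" and w: "w \<in> carrier_vec n"
    and Kw: "map_mat complex_of_real K *\<^sub>v w = a \<cdot>\<^sub>v w"
  defines "x \<equiv> vec n (\<lambda>i. Re (w $ i))" and "y \<equiv> vec n (\<lambda>i. Im (w $ i))"
  shows "K *\<^sub>v x = Re a \<cdot>\<^sub>v x - Im a \<cdot>\<^sub>v y" and "K *\<^sub>v y = Im a \<cdot>\<^sub>v x + Re a \<cdot>\<^sub>v y"
proof -
  have entry: "a * w $ i = (\<Sum>j<n. complex_of_real (K $$ (i, j)) * w $ j)" if "i < n" for i
    using arg_cong[OF Kw, of "\<lambda>v. v $ i"] that K w by (auto simp: scalar_prod_def lessThan_atLeast0)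
  show "K *\<^sub>v x = Re a \<cdot>\<^sub>v x - Im a \<cdot>\<^sub>v y"
  proof (rule eq_vecI)
    fix i assume "i < dim_vec (Re a \<cdot>\<^sub>v x - Im a \<cdot>\<^sub>v y)"
    then have i: "i < n" by (simp add: y_def)
    have "(K *\<^sub>v x) $ i = Re (a * w $ i)"
      unfolding entry[OF i] using i K by (simp add: x_def scalar_prod_def lessThan_atLeast0)
    then show "(K *\<^sub>v x) $ i = (Re a \<cdot>\<^sub>v x - Im a \<cdot>\<^sub>v y) $ i" using i by (simp add: x_def y_def)
  qed (use K in \<open>simp add: x_def y_def\<close>)
  show "K *\<^sub>v y = Im a \<cdot>\<^sub>v x + Re a \<cdot>\<^sub>v y"
  proof (rule eq_vecI)
    fix i assume "i < dim_vec (Im a \<cdot>\<^sub>v x + Re a \<cdot>\<^sub>v y)"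
    then have i: "i < n" by (simp add: y_def)
    have "(K *\<^sub>v y) $ i = Im (a * w $ i)"
      unfolding entry[OF i] using i K by (simp add: y_def scalar_prod_def lessThan_atLeast0)
    then show "(K *\<^sub>v y) $ i = (Im a \<cdot>\<^sub>v x + Re a \<cdot>\<^sub>v y) $ i" using i by (simp add: x_def y_def)
  qed (use K in \<open>simp add: x_def y_def\<close>)
qed

text \<open>A complex eigenvector \<open>x + i y\<close> makes \<open>K\<close> act on \<open>span {x, y}\<close> as a rotation-dilation;
  symmetry forbids the rotation, so the eigenvalue is real.\<close>

lemma real_sym_mat_has_eigenvalue:
  fixes K :: "real mat"
  assumes K: "K \<in> carrier_mat n n" and sym: "transpose_mat K = K" and n: "0 < n"
  shows "\<exists>l. eigenvalue K l"
proof -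
  let ?Kc = "map_mat complex_of_real K"
  have Kc: "?Kc \<in> carrier_mat n n" using K by simp
  obtain as where cp: "char_poly ?Kc = (\<Prod>a\<leftarrow>as. [:- a, 1:])" and "length as = n"
    using char_poly_factorized[OF Kc] by blast
  then obtain a rest where "as = a # rest" using n by (cases as) auto
  then have "eigenvalue ?Kc a"
    using eigenvalue_root_char_poly[OF Kc] cp by (simp add: poly_prod_list)
  then obtain w where w: "w \<in> carrier_vec n" and w0: "w \<noteq> 0\<^sub>v n" and Kw: "?Kc *\<^sub>v w = a \<cdot>\<^sub>v w"
    unfolding eigenvalue_def eigenvector_def using Kc by auto
  define x where "x = vec n (\<lambda>i. Re (w $ i))"
  define y where "y = vec n (\<lambda>i. Im (w $ i))"
  have x: "x \<in> carrier_vec n" and y: "y \<in> carrier_vec n" unfolding x_def y_def by auto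
  note Kxy = complex_eigenvector_parts[OF K w Kw, folded x_def y_def]
  have nz: "x \<noteq> 0\<^sub>v n \<or> y \<noteq> 0\<^sub>v n"
  proof (rule ccontr)
    assume "\<not> ?thesis"
    then have "x $ i = 0" "y $ i = 0" if "i < n" for i
      using that by simp_all
    then have "w $ i = 0" if "i < n" for i
      using that by (simp add: x_def y_def complex_eq_iff)
    then show False using w w0 by (auto intro: eq_vecI)
  qed
  have "Im a = 0" by (rule sym_mat_no_rotation[OF K sym x y Kxy nz])
  then have "K *\<^sub>v x = Re a \<cdot>\<^sub>v x" "K *\<^sub>v y = Re a \<cdot>\<^sub>v y" using Kxy x y by auto
  then show ?thesis
    using nz x y K unfolding eigenvalue_def eigenvector_def by blast
qed

lemma transpose_congruence:
  assumes "A \<in> carrier_mat n n" "P \<in> carrier_mat n m"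
  shows "transpose_mat (transpose_mat P * A * P) = transpose_mat P * transpose_mat A * (P :: 'a :: comm_semiring_0 mat)"
proof -
  have "transpose_mat (transpose_mat P * A * P) = transpose_mat P * transpose_mat (transpose_mat P * A)"
    using assms by (intro transpose_mult[of _ m n]) auto
  also have "transpose_mat (transpose_mat P * A) = transpose_mat A * P"
    using assms transpose_mult[of "transpose_mat P" m n A n] by simp
  finally show ?thesis using assms by simp
qed

text \<open>Unlike the library's \<open>orthogonal_mat\<close>, this asks for orthonormal columns.\<close>

locale orthonormal_mat =
  fixes n :: nat and Q :: "real mat"
  assumes carrier [simp]: "Q \<in> carrier_mat n n"
    and transpose_mult_self [simp]: "transpose_mat Q * Q = 1\<^sub>m n"
begin

lemma dims [simp]: "dim_row Q = n" "dim_col Q = n"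
  using carrier_matD[OF carrier] by auto

lemma transpose_carrier [simp]: "transpose_mat Q \<in> carrier_mat n n"
  by simp

lemma mult_transpose_self [simp]: "Q * transpose_mat Q = 1\<^sub>m n"
  using mat_mult_left_right_inverse[OF transpose_carrier carrier transpose_mult_self] .

lemmas assoc_simps = assoc_mult_mat[of _ n n _ n _ n] mult_carrier_mat[of _ n n _ n]
  assoc_mult_mat_vec[of _ n n _ n] mult_mat_vec_carrier[of _ n n]

lemma conjugate_cancel:
  assumes "A \<in> carrier_mat n n"
  shows "Q * (transpose_mat Q * A * Q) * transpose_mat Q = A"
proof -
  have "Q * (transpose_mat Q * A * Q) * transpose_mat Q
      = (Q * transpose_mat Q) * A * (Q * transpose_mat Q)"
    using assms by (simp add: assoc_simps del: mult_transpose_self)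
  also have "\<dots> = A" using carrier_matD[OF assms] by simp
  finally show ?thesis .
qed

lemma transpose_mult_col:
  assumes "k < n"
  shows "transpose_mat Q *\<^sub>v col Q k = unit_vec n k"
  using col_mult2[OF transpose_carrier carrier assms] assms by simp

lemma conjugate_mult:
  assumes "P \<in> carrier_mat n n" "D \<in> carrier_mat n n"
  shows "(Q * P) * D * transpose_mat (Q * P) = Q * (P * D * transpose_mat P) * transpose_mat Q"
  using assms by (simp add: transpose_mult[of Q n n P n] assoc_simps)

end

lemma orthonormal_mat_mult:
  assumes "orthonormal_mat n A" "orthonormal_mat n B"
  shows "orthonormal_mat n (A * B)"
proof -
  interpret A: orthonormal_mat n A by fact
  interpret B: orthonormal_mat n B by fact
  have "transpose_mat (A * B) * (A * B) = transpose_mat B * ((transpose_mat A * A) * B)"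
    by (simp add: transpose_mult[of A n n B n] A.assoc_simps del: A.transpose_mult_self)
  also have "\<dots> = 1\<^sub>m n" by simp
  finally show ?thesis by (intro orthonormal_mat.intro) auto
qed

lemma block_diag_mult:
  assumes A: "A \<in> carrier_mat 1 1" and A': "A' \<in> carrier_mat 1 1"
    and D: "D \<in> carrier_mat m m" and D': "D' \<in> carrier_mat m m"
  shows "four_block_mat A (0\<^sub>m 1 m) (0\<^sub>m m 1) D * four_block_mat A' (0\<^sub>m 1 m) (0\<^sub>m m 1) D'
     = four_block_mat (A * A') (0\<^sub>m 1 m) (0\<^sub>m m 1) (D * (D' :: 'a :: comm_ring_1 mat))"
  by (subst mult_four_block_mat[OF A _ _ D A' _ _ D']) (use A A' D D' in auto)

lemma transpose_block_diag:
  assumes "D \<in> carrier_mat m m"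
  shows "transpose_mat (four_block_mat (1\<^sub>m 1) (0\<^sub>m 1 m) (0\<^sub>m m 1) D)
     = four_block_mat (1\<^sub>m 1) (0\<^sub>m 1 m) (0\<^sub>m m 1) (transpose_mat D)"
  using assms by (subst transpose_four_block_mat) auto

lemma block_diag_conjugate:
  assumes A: "A \<in> carrier_mat 1 1" and Q: "Q \<in> carrier_mat m m" and D: "D \<in> carrier_mat m m"
  shows "four_block_mat (1\<^sub>m 1) (0\<^sub>m 1 m) (0\<^sub>m m 1) Q * four_block_mat A (0\<^sub>m 1 m) (0\<^sub>m m 1) D
      * transpose_mat (four_block_mat (1\<^sub>m 1) (0\<^sub>m 1 m) (0\<^sub>m m 1) Q)
    = four_block_mat A (0\<^sub>m 1 m) (0\<^sub>m m 1) (Q * D * transpose_mat (Q :: 'a :: comm_ring_1 mat))"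
proof -
  have "four_block_mat (1\<^sub>m 1) (0\<^sub>m 1 m) (0\<^sub>m m 1) Q * four_block_mat A (0\<^sub>m 1 m) (0\<^sub>m m 1) D
      * transpose_mat (four_block_mat (1\<^sub>m 1) (0\<^sub>m 1 m) (0\<^sub>m m 1) Q)
    = four_block_mat (1\<^sub>m 1 * A) (0\<^sub>m 1 m) (0\<^sub>m m 1) (Q * D)
      * four_block_mat (1\<^sub>m 1) (0\<^sub>m 1 m) (0\<^sub>m m 1) (transpose_mat Q)"
    unfolding transpose_block_diag[OF Q] block_diag_mult[OF one_carrier_mat A Q D] ..
  also have "\<dots> = four_block_mat (1\<^sub>m 1 * A * 1\<^sub>m 1) (0\<^sub>m 1 m) (0\<^sub>m m 1) (Q * D * transpose_mat Q)"
    using A Q D by (intro block_diag_mult) auto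
  finally show ?thesis using carrier_matD[OF A] by simp
qed

lemma orthonormal_mat_block_diag:
  assumes "orthonormal_mat m Q"
  shows "orthonormal_mat (Suc m) (four_block_mat (1\<^sub>m 1) (0\<^sub>m 1 m) (0\<^sub>m m 1) Q)"
proof -
  interpret orthonormal_mat m Q by fact
  let ?Q1 = "four_block_mat (1\<^sub>m 1) (0\<^sub>m 1 m) (0\<^sub>m m 1) Q"
  have "?Q1 \<in> carrier_mat (1 + m) (1 + m)" by (rule four_block_carrier_mat) auto
  moreover have "transpose_mat ?Q1 * ?Q1 = 1\<^sub>m (1 + m)"
    unfolding transpose_block_diag[OF carrier] by (subst block_diag_mult) auto
  ultimately show ?thesis by unfold_locales simp_all
qed

text \<open>Householder reflection \<open>1 - c h h\<^sup>T\<close>; the hypothesis on \<open>c\<close> also covers \<open>h = 0\<close>.\<close>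

lemma householder_orthonormal:
  fixes h :: "real vec"
  assumes h: "h \<in> carrier_vec n" and c: "c * c * (h \<bullet> h) = 2 * c"
  shows "orthonormal_mat n (mat n n (\<lambda>(i, j). (if i = j then 1 else 0) - c * h $ i * h $ j))"
    (is "orthonormal_mat n ?H")
proof
  have "?H * ?H = 1\<^sub>m n"
  proof (rule eq_matI)
    fix i j assume "i < dim_row (1\<^sub>m n :: real mat)" "j < dim_col (1\<^sub>m n :: real mat)"
    then have i: "i < n" and j: "j < n" by auto
    have "(?H * ?H) $$ (i, j) = (\<Sum>k<n. ((if i = k then 1 else 0) - c * h $ i * h $ k)
                 * ((if k = j then 1 else 0) - c * h $ k * h $ j))"
      using i j by (auto simp: scalar_prod_def lessThan_atLeast0 intro!: sum.cong)
    also have "\<dots> = (\<Sum>k<n. (if i = k then (if k = j then 1 else 0) else 0)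
         - (if i = k then c * h $ k * h $ j else 0) - (if k = j then c * h $ i * h $ k else 0)
         + c * c * h $ i * h $ j * (h $ k * h $ k))"
      by (intro sum.cong) (auto simp: algebra_simps)
    also have "\<dots> = (if i = j then 1 else 0) - 2 * c * h $ i * h $ j
         + c * c * (h \<bullet> h) * h $ i * h $ j"
      using i j h by (simp add: sum.distrib sum_subtractf sum_distrib_left scalar_prod_def
          lessThan_atLeast0 algebra_simps)
    finally show "(?H * ?H) $$ (i, j) = 1\<^sub>m n $$ (i, j)" using i j c by simp
  qed auto
  moreover have "transpose_mat ?H = ?H" by (intro eq_matI) auto
  ultimately show "transpose_mat ?H * ?H = 1\<^sub>m n" by simp
qed simp

lemma orthonormal_mat_with_first_col:
  fixes u :: "real vec"
  assumes u: "u \<in> carrier_vec n" and uu: "u \<bullet> u = 1" and n: "0 < n"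
  shows "\<exists>H. orthonormal_mat n H \<and> col H 0 = u"
proof -
  define h where "h = u - unit_vec n 0"
  define c where "c = 2 / (h \<bullet> h)"
  define H where "H = mat n n (\<lambda>(i, j). (if i = j then 1 else 0) - c * h $ i * h $ j)"
  have h: "h \<in> carrier_vec n" unfolding h_def using u by simp
  have "c * c * (h \<bullet> h) = 2 * c" unfolding c_def by (cases "h \<bullet> h = 0") simp_all
  then have "orthonormal_mat n H" unfolding H_def by (rule householder_orthonormal[OF h])
  moreover have "col H 0 = u"
  proof (rule eq_vecI)
    have hh: "h \<bullet> h = - 2 * h $ 0"
      using u uu n unfolding h_def
      by (simp add: minus_scalar_prod_distrib[of u n] scalar_prod_minus_distrib[of _ n])
    fix i assume "i < dim_vec u"
    then have i: "i < n" using u by simp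
    have col: "col H 0 $ i = unit_vec n 0 $ i - c * h $ i * h $ 0" using i n unfolding H_def by simp
    show "col H 0 $ i = u $ i"
    proof (cases "h $ 0 = 0")
      case True
      then have "h = 0\<^sub>v n" using hh scalar_prod_self_eq_0_iff[OF h] by simp
      then have "h $ i = 0" using i by simp
      then show ?thesis using col i u by (simp add: h_def)
    next
      case False
      then have "c * h $ 0 = -1" unfolding c_def hh by (simp add: field_simps)
      moreover have "c * h $ i * h $ 0 = (c * h $ 0) * h $ i" by simp
      ultimately have "c * h $ i * h $ 0 = - h $ i" by simp
      then show ?thesis using col i u by (simp add: h_def)
    qed
  qed (use u H_def in simp)
  ultimately show ?thesis by blast
qed

lemma sym_mat_block_split:
  fixes B :: "'a :: comm_ring_1 mat"
  assumes B: "B \<in> carrier_mat (Suc m) (Suc m)" and sym: "transpose_mat B = B"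
    and col0: "col B 0 = l \<cdot>\<^sub>v unit_vec (Suc m) 0"
  defines "K' \<equiv> mat m m (\<lambda>(i, j). B $$ (Suc i, Suc j))"
  shows "B = four_block_mat (mat_diag 1 (\<lambda>_. l)) (0\<^sub>m 1 m) (0\<^sub>m m 1) K'"
    and "transpose_mat K' = K'"
proof -
  have B_col0: "B $$ (i, 0) = (if i = 0 then l else 0)" if "i < Suc m" for i
    using arg_cong[OF col0, of "\<lambda>v. v $ i"] that B by simp
  have B_row0: "B $$ (0, j) = (if j = 0 then l else 0)" if "j < Suc m" for j
    using B_col0[OF that] arg_cong[OF sym, of "\<lambda>M. M $$ (j, 0)"] that B by simp
  show "B = four_block_mat (mat_diag 1 (\<lambda>_. l)) (0\<^sub>m 1 m) (0\<^sub>m m 1) K'"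
  proof (rule eq_matI)
    fix i j assume "i < dim_row (four_block_mat (mat_diag 1 (\<lambda>_. l)) (0\<^sub>m 1 m) (0\<^sub>m m 1) K')"
      and "j < dim_col (four_block_mat (mat_diag 1 (\<lambda>_. l)) (0\<^sub>m 1 m) (0\<^sub>m m 1) K')"
    then have i: "i < Suc m" and j: "j < Suc m" by (auto simp: K'_def mat_diag_def)
    then show "B $$ (i, j) = four_block_mat (mat_diag 1 (\<lambda>_. l)) (0\<^sub>m 1 m) (0\<^sub>m m 1) K' $$ (i, j)"
      using B_col0 B_row0 by (cases i; cases j) (auto simp: K'_def mat_diag_def)
  qed (use B in \<open>auto simp: K'_def mat_diag_def\<close>)
  show "transpose_mat K' = K'"
  proof (rule eq_matI)
    fix i j assume "i < dim_row K'" "j < dim_col K'"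
    then show "transpose_mat K' $$ (i, j) = K' $$ (i, j)"
      using arg_cong[OF sym, of "\<lambda>M. M $$ (Suc i, Suc j)"] B by (simp add: K'_def)
  qed (auto simp: K'_def)
qed

lemma sym_mat_deflation:
  fixes K :: "real mat"
  assumes K: "K \<in> carrier_mat (Suc m) (Suc m)" and sym: "transpose_mat K = K"
  obtains H l K' where "orthonormal_mat (Suc m) H" "K' \<in> carrier_mat m m" "transpose_mat K' = K'"
    "transpose_mat H * K * H = four_block_mat (mat_diag 1 (\<lambda>_. l)) (0\<^sub>m 1 m) (0\<^sub>m m 1) K'"
proof -
  obtain l where "eigenvalue K l" using real_sym_mat_has_eigenvalue[OF K sym] by auto
  then obtain v where v: "v \<in> carrier_vec (Suc m)" "v \<noteq> 0\<^sub>v (Suc m)" and Kv: "K *\<^sub>v v = l \<cdot>\<^sub>v v"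
    using K unfolding eigenvalue_def eigenvector_def by auto
  define u where "u = (1 / sqrt (v \<bullet> v)) \<cdot>\<^sub>v v"
  have u: "u \<in> carrier_vec (Suc m)" unfolding u_def using v by simp
  have "0 < v \<bullet> v" using scalar_prod_self_pos v by blast
  then have "u \<bullet> u = 1" unfolding u_def using v by simp
  then obtain H where H: "orthonormal_mat (Suc m) H" and H0: "col H 0 = u"
    using orthonormal_mat_with_first_col[OF u] by auto
  interpret H: orthonormal_mat "Suc m" H by (rule H)
  have Ku: "K *\<^sub>v u = l \<cdot>\<^sub>v u"
    unfolding u_def using v Kv mult_mat_vec[OF K v(1)] by (simp add: smult_smult_assoc mult.commute)
  let ?B = "transpose_mat H * K * H"
  have B: "?B \<in> carrier_mat (Suc m) (Suc m)" using K by (simp add: H.assoc_simps)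
  have B_sym: "transpose_mat ?B = ?B" using transpose_congruence[OF K H.carrier] sym by simp
  have B_col0: "col ?B 0 = l \<cdot>\<^sub>v unit_vec (Suc m) 0"
  proof -
    have "col ?B 0 = (transpose_mat H * K) *\<^sub>v col H 0"
      using K by (intro col_mult2[of _ "Suc m" "Suc m"]) auto
    also have "\<dots> = transpose_mat H *\<^sub>v (K *\<^sub>v col H 0)"
      unfolding H0 by (rule assoc_mult_mat_vec[OF H.transpose_carrier K u])
    also have "\<dots> = l \<cdot>\<^sub>v (transpose_mat H *\<^sub>v col H 0)"
      unfolding H0 Ku by (rule mult_mat_vec[OF H.transpose_carrier u])
    finally show ?thesis using H.transpose_mult_col[of 0] by simp
  qed
  note split = sym_mat_block_split[OF B B_sym B_col0]
  show ?thesis by (rule that[OF H _ split(2) split(1)]) simp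
qed

theorem real_sym_mat_spectral_decomposition:
  fixes K :: "real mat"
  assumes "K \<in> carrier_mat n n" and "transpose_mat K = K"
  shows "\<exists>Q d. orthonormal_mat n Q \<and> K = Q * mat_diag n d * transpose_mat Q"
  using assms
proof (induction n arbitrary: K)
  case 0
  have "orthonormal_mat 0 (1\<^sub>m 0)" by unfold_locales auto
  moreover have "K = 1\<^sub>m 0 * mat_diag 0 (\<lambda>_. 0) * transpose_mat (1\<^sub>m 0)"
    using 0 by (auto intro!: eq_matI)
  ultimately show ?case by blast
next
  case (Suc m)
  obtain H l K' where H: "orthonormal_mat (Suc m) H" and K': "K' \<in> carrier_mat m m"
    "transpose_mat K' = K'"
    and HKH: "transpose_mat H * K * H = four_block_mat (mat_diag 1 (\<lambda>_. l)) (0\<^sub>m 1 m) (0\<^sub>m m 1) K'"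
    using sym_mat_deflation[OF Suc.prems] .
  obtain Q' d' where Q': "orthonormal_mat m Q'" and K'_eq: "K' = Q' * mat_diag m d' * transpose_mat Q'"
    using Suc.IH[OF K'] by blast
  interpret H: orthonormal_mat "Suc m" H by (rule H)
  interpret Q': orthonormal_mat m Q' by (rule Q')
  define Q1 where "Q1 = four_block_mat (1\<^sub>m 1) (0\<^sub>m 1 m) (0\<^sub>m m 1) Q'"
  define d where "d = (\<lambda>j. if j = 0 then l else d' (j - 1))"
  have Q1: "orthonormal_mat (Suc m) Q1" unfolding Q1_def by (rule orthonormal_mat_block_diag[OF Q'])
  have D: "mat_diag (Suc m) d = four_block_mat (mat_diag 1 (\<lambda>_. l)) (0\<^sub>m 1 m) (0\<^sub>m m 1) (mat_diag m d')"
    by (rule eq_matI) (auto simp: mat_diag_def d_def)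
  have "Q1 * mat_diag (Suc m) d * transpose_mat Q1 = transpose_mat H * K * H"
    unfolding Q1_def HKH K'_eq D by (rule block_diag_conjugate) auto
  then have "K = (H * Q1) * mat_diag (Suc m) d * transpose_mat (H * Q1)"
    using H.conjugate_cancel[OF Suc.prems(1)] H.conjugate_mult[of Q1] Q1
    by (simp add: orthonormal_mat.carrier)
  then show ?case using orthonormal_mat_mult[OF H Q1] by blast
qed

lemma dim_mat_diag [simp]: "dim_row (mat_diag n d) = n" "dim_col (mat_diag n d) = n"
  by (simp_all add: mat_diag_def)

lemma mat_diag_mult_vec:
  assumes "y \<in> carrier_vec n"
  shows "mat_diag n d *\<^sub>v y = vec n (\<lambda>k. d k * y $ k)"
proof (rule eq_vecI)
  fix k assume "k < dim_vec (vec n (\<lambda>k. d k * y $ k))"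
  then have k: "k < n" by simp
  have "(mat_diag n d *\<^sub>v y) $ k = (\<Sum>j\<in>{0..<n}. (if k = j then d j else 0) * y $ j)"
    using k assms by (simp add: mat_diag_def scalar_prod_def)
  also have "\<dots> = (\<Sum>j\<in>{0..<n}. if k = j then d j * y $ j else 0)"
    by (intro sum.cong) auto
  finally show "(mat_diag n d *\<^sub>v y) $ k = vec n (\<lambda>k. d k * y $ k) $ k" using k by simp
qed simp

lemma transpose_mat_diag [simp]: "transpose_mat (mat_diag n d) = mat_diag n d"
  by (rule eq_matI) (auto simp: mat_diag_def)

context orthonormal_mat
begin

lemma col_carrier [simp]: "col Q k \<in> carrier_vec n"
  using col_dim[of Q k] by simp

lemma col_scalar_prod:
  assumes "i < n" "j < n"
  shows "col Q i \<bullet> col Q j = (if i = j then 1 else 0)"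
  using arg_cong[OF transpose_mult_self, of "\<lambda>M. M $$ (i, j)"] assms
  by (simp del: transpose_mult_self)

lemma mult_unit_vec:
  assumes "k < n"
  shows "Q *\<^sub>v unit_vec n k = col Q k"
  using col_mult2[OF carrier one_carrier_mat assms] assms by simp

lemma spectral_mult_vec:
  assumes "v \<in> carrier_vec n"
  shows "(Q * mat_diag n d * transpose_mat Q) *\<^sub>v v = Q *\<^sub>v (mat_diag n d *\<^sub>v (transpose_mat Q *\<^sub>v v))"
  using assms by (simp add: assoc_simps)

lemma spectral_mult_col:
  assumes "k < n"
  shows "(Q * mat_diag n d * transpose_mat Q) *\<^sub>v col Q k = d k \<cdot>\<^sub>v col Q k"
proof -
  have "mat_diag n d *\<^sub>v unit_vec n k = d k \<cdot>\<^sub>v unit_vec n k"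
    using assms by (subst mat_diag_mult_vec) (auto intro!: eq_vecI)
  then show ?thesis
    using assms mult_mat_vec[OF carrier, of "unit_vec n k" "d k"]
    by (simp add: spectral_mult_vec transpose_mult_col mult_unit_vec)
qed

lemma spectral_carrier [simp]: "Q * mat_diag n d * transpose_mat Q \<in> carrier_mat n n"
  by (simp add: assoc_simps)

lemma spectral_quad_form_col:
  assumes "k < n"
  shows "col Q k \<bullet> ((Q * mat_diag n d * transpose_mat Q) *\<^sub>v col Q k) = d k"
  using spectral_mult_col[OF assms] col_scalar_prod[OF assms assms] by simp

lemma spectral_eigenvalue:
  assumes "k < n"
  shows "eigenvalue (Q * mat_diag n d * transpose_mat Q) (d k)"
proof -
  have "col Q k \<noteq> 0\<^sub>v n" using col_scalar_prod[OF assms assms] assms by auto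
  then show ?thesis
    unfolding eigenvalue_def eigenvector_def using spectral_mult_col[OF assms]
    by (intro exI[of _ "col Q k"]) simp
qed

lemma spectral_quad_form:
  assumes v: "v \<in> carrier_vec n"
  shows "v \<bullet> ((Q * mat_diag n d * transpose_mat Q) *\<^sub>v v) = (\<Sum>k\<in>{0..<n}. d k * (col Q k \<bullet> v)\<^sup>2)"
proof -
  define y where "y = transpose_mat Q *\<^sub>v v"
  have y: "y \<in> carrier_vec n" unfolding y_def using v by (simp add: assoc_simps)
  have Dy: "mat_diag n d *\<^sub>v y \<in> carrier_vec n" by (rule mult_mat_vec_carrier[OF mat_diag_dim y])
  have "v \<bullet> ((Q * mat_diag n d * transpose_mat Q) *\<^sub>v v) = y \<bullet> (mat_diag n d *\<^sub>v y)"
    using transpose_vec_mult_scalar[OF carrier Dy v] unfolding spectral_mult_vec[OF v] y_def by simp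
  also have "\<dots> = (\<Sum>k\<in>{0..<n}. y $ k * (d k * y $ k))"
    unfolding mat_diag_mult_vec[OF y] scalar_prod_def using y by simp
  also have "\<dots> = (\<Sum>k\<in>{0..<n}. d k * (col Q k \<bullet> v)\<^sup>2)"
    by (intro sum.cong) (auto simp: y_def power2_eq_square)
  finally show ?thesis .
qed

lemma scalar_prod_self_expansion:
  assumes "v \<in> carrier_vec n"
  shows "v \<bullet> v = (\<Sum>k\<in>{0..<n}. (col Q k \<bullet> v)\<^sup>2)"
  using spectral_quad_form[OF assms, of "\<lambda>_. 1"] assms by simp

lemma spectral_mult:
  "(Q * mat_diag n d * transpose_mat Q) * (Q * mat_diag n e * transpose_mat Q)
    = Q * mat_diag n (\<lambda>k. d k * e k) * transpose_mat Q"
proof -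
  have "(Q * mat_diag n d * transpose_mat Q) * (Q * mat_diag n e * transpose_mat Q)
    = Q * mat_diag n d * (transpose_mat Q * Q) * mat_diag n e * transpose_mat Q"
    by (simp add: assoc_simps del: transpose_mult_self)
  also have "\<dots> = Q * mat_diag n (\<lambda>k. d k * e k) * transpose_mat Q" by (simp add: assoc_simps)
  finally show ?thesis .
qed

lemma spectral_transpose:
  "transpose_mat (Q * mat_diag n d * transpose_mat Q) = Q * mat_diag n d * transpose_mat Q"
  using transpose_congruence[OF mat_diag_dim transpose_carrier, of d] by simp

lemma spectral_trace:
  "mat_trace (Q * mat_diag n d * transpose_mat Q) = (\<Sum>k\<in>{0..<n}. d k)"
proof -
  have diag: "(Q * mat_diag n d * transpose_mat Q) $$ (i, i) = (\<Sum>k\<in>{0..<n}. d k * (Q $$ (i, k) * Q $$ (i, k)))"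
    if "i < n" for i
    using that unfolding mat_diag_mult_right[OF carrier] by (auto simp: scalar_prod_def intro!: sum.cong)
  have "mat_trace (Q * mat_diag n d * transpose_mat Q) = (\<Sum>i\<in>{0..<n}. (Q * mat_diag n d * transpose_mat Q) $$ (i, i))"
    unfolding mat_trace_def by (simp add: lessThan_atLeast0)
  also have "\<dots> = (\<Sum>i\<in>{0..<n}. \<Sum>k\<in>{0..<n}. d k * (Q $$ (i, k) * Q $$ (i, k)))"
    by (rule sum.cong[OF refl diag]) simp
  also have "\<dots> = (\<Sum>k\<in>{0..<n}. d k * (col Q k \<bullet> col Q k))"
    by (subst sum.swap) (auto simp: scalar_prod_def sum_distrib_left intro!: sum.cong)
  also have "\<dots> = (\<Sum>k\<in>{0..<n}. d k)" by (intro sum.cong) (auto simp: col_scalar_prod)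
  finally show ?thesis .
qed

end

section \<open>Positive semidefinite matrices and the pseudoinverse\<close>

lemma sym_psd_spectral_decomposition:
  assumes "sym_psd n K"
  obtains Q d where "orthonormal_mat n Q" "K = Q * mat_diag n d * transpose_mat Q"
    "\<And>k. k < n \<Longrightarrow> 0 \<le> d k"
proof -
  have K: "K \<in> carrier_mat n n" "transpose_mat K = K"
    and psd: "\<And>v. v \<in> carrier_vec n \<Longrightarrow> 0 \<le> v \<bullet> (K *\<^sub>v v)"
    using assms unfolding sym_psd_def by auto
  obtain Q d where Q: "orthonormal_mat n Q" and Kd: "K = Q * mat_diag n d * transpose_mat Q"
    using real_sym_mat_spectral_decomposition[OF K] by blast
  interpret orthonormal_mat n Q by (rule Q)
  have "0 \<le> d k" if "k < n" for k
    using psd[OF col_carrier, of k] spectral_quad_form_col[OF that] Kd by simp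
  then show thesis using that[OF Q Kd] by blast
qed

lemma sym_psd_quad_form_eq_0D:
  assumes K: "sym_psd n K" and x: "x \<in> carrier_vec n" and x0: "x \<bullet> (K *\<^sub>v x) = 0"
  shows "K *\<^sub>v x = 0\<^sub>v n"
proof -
  obtain Q d where Q: "orthonormal_mat n Q" and Kd: "K = Q * mat_diag n d * transpose_mat Q"
    and d: "\<And>k. k < n \<Longrightarrow> 0 \<le> d k"
    using sym_psd_spectral_decomposition[OF K] by blast
  interpret orthonormal_mat n Q by (rule Q)
  have "(\<Sum>k\<in>{0..<n}. d k * (col Q k \<bullet> x)\<^sup>2) = 0"
    using x0 spectral_quad_form[OF x] Kd by simp
  then have "d k * (col Q k \<bullet> x)\<^sup>2 = 0" if "k < n" for k
    using that d by (subst (asm) sum_nonneg_eq_0_iff) auto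
  then have "mat_diag n d *\<^sub>v (transpose_mat Q *\<^sub>v x) = 0\<^sub>v n"
    using x by (subst mat_diag_mult_vec) (auto simp: assoc_simps power2_eq_square)
  then show ?thesis
    unfolding Kd spectral_mult_vec[OF x] by auto
qed

lemma sym_psd_rayleigh:
  assumes K: "sym_psd n K" and v: "v \<in> carrier_vec n" "v \<noteq> 0\<^sub>v n"
    and ker: "\<And>x. x \<in> carrier_vec n \<Longrightarrow> K *\<^sub>v x = 0\<^sub>v n \<Longrightarrow> x \<bullet> v = 0"
  shows "\<exists>l. eigenvalue K l \<and> 0 < l \<and> l * (v \<bullet> v) \<le> v \<bullet> (K *\<^sub>v v)"
proof -
  obtain Q d where Q: "orthonormal_mat n Q" and Kd: "K = Q * mat_diag n d * transpose_mat Q"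
    and d: "\<And>k. k < n \<Longrightarrow> 0 \<le> d k"
    using sym_psd_spectral_decomposition[OF K] by blast
  interpret orthonormal_mat n Q by (rule Q)
  have ker_col: "col Q k \<bullet> v = 0" if "k < n" "d k = 0" for k
  proof (rule ker[OF col_carrier])
    have "K *\<^sub>v col Q k = 0 \<cdot>\<^sub>v col Q k" using spectral_mult_col[OF that(1), of d] that(2) Kd by simp
    then show "K *\<^sub>v col Q k = 0\<^sub>v n" by (auto intro!: eq_vecI)
  qed
  define S where "S = {k\<in>{0..<n}. d k \<noteq> 0}"
  have "S \<noteq> {}"
  proof
    assume "S = {}"
    then have "v \<bullet> v = 0"
      unfolding scalar_prod_self_expansion[OF v(1)] using ker_col by (auto simp: S_def)
    then show False using v scalar_prod_self_eq_0_iff by blast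
  qed
  then obtain k where k: "k \<in> S" and k_min: "\<And>j. j \<in> S \<Longrightarrow> d k \<le> d j"
    using Min_in[of "d ` S"] Min_le[of "d ` S"] unfolding S_def by fastforce
  have "d k * (v \<bullet> v) = (\<Sum>j\<in>{0..<n}. d k * (col Q j \<bullet> v)\<^sup>2)"
    unfolding scalar_prod_self_expansion[OF v(1)] sum_distrib_left ..
  also have "\<dots> \<le> (\<Sum>j\<in>{0..<n}. d j * (col Q j \<bullet> v)\<^sup>2)"
  proof (rule sum_mono)
    fix j assume "j \<in> {0..<n}"
    then show "d k * (col Q j \<bullet> v)\<^sup>2 \<le> d j * (col Q j \<bullet> v)\<^sup>2"
      using ker_col[of j] k_min[of j] by (cases "d j = 0") (auto simp: S_def intro: mult_right_mono)
  qed
  also have "\<dots> = v \<bullet> (K *\<^sub>v v)" unfolding Kd spectral_quad_form[OF v(1)] ..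
  finally show ?thesis
    using spectral_eigenvalue[of k d] k d[of k] Kd unfolding S_def by force
qed

lemma sym_mat_nonzero_eigenvalue:
  fixes K :: "real mat"
  assumes K: "K \<in> carrier_mat n n" "transpose_mat K = K"
    and v: "v \<in> carrier_vec n" and nz: "v \<bullet> (K *\<^sub>v v) \<noteq> 0"
  shows "\<exists>l. eigenvalue K l \<and> l \<noteq> 0"
proof -
  obtain Q d where Q: "orthonormal_mat n Q" and Kd: "K = Q * mat_diag n d * transpose_mat Q"
    using real_sym_mat_spectral_decomposition[OF K] by blast
  interpret orthonormal_mat n Q by (rule Q)
  have "(\<Sum>k\<in>{0..<n}. d k * (col Q k \<bullet> v)\<^sup>2) \<noteq> 0"
    using nz spectral_quad_form[OF v] Kd by simp
  then obtain k where "k < n" "d k \<noteq> 0"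
    by (metis (no_types, lifting) atLeastLessThan_iff mult_eq_0_iff sum.neutral)
  then show ?thesis using spectral_eigenvalue Kd by blast
qed

lemma sym_psd_trace_nonneg:
  assumes "sym_psd n K"
  shows "0 \<le> mat_trace K"
proof -
  obtain Q d where Q: "orthonormal_mat n Q" and Kd: "K = Q * mat_diag n d * transpose_mat Q"
    and d: "\<And>k. k < n \<Longrightarrow> 0 \<le> d k"
    using sym_psd_spectral_decomposition[OF assms] by blast
  show ?thesis
    unfolding Kd orthonormal_mat.spectral_trace[OF Q] using d by (intro sum_nonneg) auto
qed

lemma penrose_unique:
  fixes A X Y :: "real mat"
  assumes A: "A \<in> carrier_mat n n" and X: "X \<in> carrier_mat n n" and Y: "Y \<in> carrier_mat n n"
    and x1: "A * X * A = A" and x2: "X * A * X = X" and x3: "transpose_mat (A * X) = A * X"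
    and x4: "transpose_mat (X * A) = X * A"
    and y1: "A * Y * A = A" and y2: "Y * A * Y = Y" and y3: "transpose_mat (A * Y) = A * Y"
    and y4: "transpose_mat (Y * A) = Y * A"
  shows "X = Y"
proof -
  define At Xt Yt where "At = transpose_mat A" and "Xt = transpose_mat X" and "Yt = transpose_mat Y"
  have At: "At \<in> carrier_mat n n" and Xt: "Xt \<in> carrier_mat n n" and Yt: "Yt \<in> carrier_mat n n"
    unfolding At_def Xt_def Yt_def using A X Y by auto
  note assoc = assoc_mult_mat[of _ n n _ n _ n] mult_carrier_mat[of _ n n _ n]
  have e3: "Xt * At = A * X" using x3 transpose_mult[OF A X] unfolding At_def Xt_def by simp
  have e4: "At * Xt = X * A" using x4 transpose_mult[OF X A] unfolding At_def Xt_def by simp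
  have f3: "Yt * At = A * Y" using y3 transpose_mult[OF A Y] unfolding At_def Yt_def by simp
  have f4: "At * Yt = Y * A" using y4 transpose_mult[OF Y A] unfolding At_def Yt_def by simp
  have AYA: "At * (Yt * At) = At"
    using arg_cong[OF y1, of transpose_mat] A Y unfolding At_def Yt_def
    by (simp add: transpose_mult[of _ n n _ n] assoc)
  have AXA: "(At * Xt) * At = At"
    using arg_cong[OF x1, of transpose_mat] A X unfolding At_def Xt_def
    by (simp add: transpose_mult[of _ n n _ n] assoc)
  have "X = X * (A * X)" using x2 A X by (simp add: assoc)
  also have "\<dots> = X * (Xt * (At * (Yt * At)))" unfolding e3[symmetric] AYA ..
  also have "\<dots> = X * ((Xt * At) * (Yt * At))" using X Xt At Yt by (simp add: assoc)
  also have "\<dots> = (X * A * X) * (A * Y)" unfolding e3 f3 using X A Y by (simp add: assoc)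
  finally have X_eq: "X = X * (A * Y)" unfolding x2 .
  have "Y = (At * Yt) * Y" using y2 f4 by simp
  also have "\<dots> = ((At * Xt) * At) * Yt * Y" unfolding AXA ..
  also have "\<dots> = (At * Xt) * ((At * Yt) * Y)" using Xt At Yt Y by (simp add: assoc)
  also have "\<dots> = X * (A * Y)" unfolding e4 f4 using X A Y y2 by (simp add: assoc)
  finally show ?thesis using X_eq by simp
qed

lemma pinv_eqI:
  fixes A X :: "real mat"
  assumes A: "A \<in> carrier_mat n n" and X: "X \<in> carrier_mat n n"
    and penrose: "A * X * A = A" "X * A * X = X" "transpose_mat (A * X) = A * X"
      "transpose_mat (X * A) = X * A"
  shows "pinv A = X"
  unfolding pinv_def
proof (rule the_equality)
  fix Y assume "Y \<in> carrier_mat (dim_col A) (dim_row A) \<and> A * Y * A = A \<and> Y * A * Y = Y \<and>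
      transpose_mat (A * Y) = A * Y \<and> transpose_mat (Y * A) = Y * A"
  then show "Y = X" using penrose_unique[OF A _ X] penrose A by auto
qed (use A X penrose in auto)

text \<open>Since \<open>inverse 0 = 0\<close> in HOL, inverting the diagonal entrywise gives its pseudoinverse.\<close>

lemma (in orthonormal_mat) pinv_spectral:
  "pinv (Q * mat_diag n d * transpose_mat Q) = Q * mat_diag n (\<lambda>k. inverse (d k)) * transpose_mat Q"
proof (rule pinv_eqI[where n = n])
  have "(\<lambda>k. d k * inverse (d k) * d k) = d" "(\<lambda>k. inverse (d k) * d k * inverse (d k)) = (\<lambda>k. inverse (d k))"
    by (auto simp: fun_eq_iff field_simps)
  then show "(Q * mat_diag n d * transpose_mat Q) * (Q * mat_diag n (\<lambda>k. inverse (d k)) * transpose_mat Q)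
      * (Q * mat_diag n d * transpose_mat Q) = Q * mat_diag n d * transpose_mat Q"
    "(Q * mat_diag n (\<lambda>k. inverse (d k)) * transpose_mat Q) * (Q * mat_diag n d * transpose_mat Q)
      * (Q * mat_diag n (\<lambda>k. inverse (d k)) * transpose_mat Q)
      = Q * mat_diag n (\<lambda>k. inverse (d k)) * transpose_mat Q"
    by (simp_all only: spectral_mult)
qed (simp_all only: spectral_carrier spectral_mult spectral_transpose)

lemma sym_psd_pinv:
  assumes "sym_psd n B"
  shows "sym_psd n (pinv B)"
proof -
  obtain Q d where Q: "orthonormal_mat n Q" and Bd: "B = Q * mat_diag n d * transpose_mat Q"
    and d: "\<And>k. k < n \<Longrightarrow> 0 \<le> d k"
    using sym_psd_spectral_decomposition[OF assms] by blast
  interpret orthonormal_mat n Q by (rule Q)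
  show ?thesis
    unfolding Bd pinv_spectral sym_psd_def
  proof (intro conjI ballI spectral_carrier spectral_transpose)
    fix v :: "real vec" assume v: "v \<in> carrier_vec n"
    show "0 \<le> v \<bullet> ((Q * mat_diag n (\<lambda>k. inverse (d k)) * transpose_mat Q) *\<^sub>v v)"
      unfolding spectral_quad_form[OF v] using d by (intro sum_nonneg) simp
  qed
qed

text \<open>Every nonzero eigenvalue of \<open>B\<close> is at most \<open>tr B\<close>, so \<open>B\<^sup>\<dagger> \<succeq> (tr B)\<^sup>-\<^sup>1 \<cdot> 1\<close> on the range of \<open>B\<close>.\<close>

lemma sym_psd_norm_le_trace_pinv:
  assumes B: "sym_psd n B" and z: "z \<in> carrier_vec n"
    and ker: "\<And>u. u \<in> carrier_vec n \<Longrightarrow> B *\<^sub>v u = 0\<^sub>v n \<Longrightarrow> u \<bullet> z = 0"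
  shows "z \<bullet> z \<le> mat_trace B * (z \<bullet> (pinv B *\<^sub>v z))"
proof -
  obtain Q d where Q: "orthonormal_mat n Q" and Bd: "B = Q * mat_diag n d * transpose_mat Q"
    and d: "\<And>k. k < n \<Longrightarrow> 0 \<le> d k"
    using sym_psd_spectral_decomposition[OF B] by blast
  interpret orthonormal_mat n Q by (rule Q)
  let ?t = "\<Sum>k\<in>{0..<n}. d k"
  have "(col Q k \<bullet> z)\<^sup>2 \<le> ?t * (inverse (d k) * (col Q k \<bullet> z)\<^sup>2)" if k: "k < n" for k
  proof (cases "d k = 0")
    case True
    have "B *\<^sub>v col Q k = 0 \<cdot>\<^sub>v col Q k" using spectral_mult_col[OF k, of d] True Bd by simp
    then have "col Q k \<bullet> z = 0" by (intro ker) (auto intro!: eq_vecI)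
    then show ?thesis by simp
  next
    case False
    have "d k \<le> ?t" using k d by (intro member_le_sum) auto
    then have "1 \<le> ?t * inverse (d k)" using False d[OF k] by (simp add: field_simps)
    from mult_right_mono[OF this, of "(col Q k \<bullet> z)\<^sup>2"] show ?thesis by (simp add: mult.assoc)
  qed
  then have "z \<bullet> z \<le> ?t * (\<Sum>k\<in>{0..<n}. inverse (d k) * (col Q k \<bullet> z)\<^sup>2)"
    unfolding scalar_prod_self_expansion[OF z] sum_distrib_left by (intro sum_mono) auto
  then show ?thesis unfolding Bd pinv_spectral spectral_trace spectral_quad_form[OF z] .
qed

section \<open>Gram matrices and their nonzero eigenvalues\<close>

lemma quad_form_congruence:
  fixes A M :: "'a :: comm_semiring_0 mat"
  assumes A: "A \<in> carrier_mat m n" and M: "M \<in> carrier_mat m m" and v: "v \<in> carrier_vec n"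
  shows "v \<bullet> ((transpose_mat A * M * A) *\<^sub>v v) = (A *\<^sub>v v) \<bullet> (M *\<^sub>v (A *\<^sub>v v))"
proof -
  have MAv: "M *\<^sub>v (A *\<^sub>v v) \<in> carrier_vec m" using A M v by simp
  have "(transpose_mat A * M * A) *\<^sub>v v = (transpose_mat A * M) *\<^sub>v (A *\<^sub>v v)"
    using A M v by (intro assoc_mult_mat_vec[of _ n m]) auto
  also have "\<dots> = transpose_mat A *\<^sub>v (M *\<^sub>v (A *\<^sub>v v))"
    using A M v by (intro assoc_mult_mat_vec[of _ n m]) auto
  finally have "(transpose_mat A * M * A) *\<^sub>v v = transpose_mat A *\<^sub>v (M *\<^sub>v (A *\<^sub>v v))" .
  then show ?thesis
    using transpose_vec_mult_scalar[OF A v MAv] comm_scalar_prod[OF v, of "transpose_mat A *\<^sub>v _"]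
      comm_scalar_prod[of "A *\<^sub>v v" m] A v MAv by auto
qed

lemma sym_psd_congruence:
  assumes M: "sym_psd m M" and A: "A \<in> carrier_mat m n"
  shows "sym_psd n (transpose_mat A * M * A)"
  using M A transpose_congruence[of M m A n] quad_form_congruence[OF A]
  unfolding sym_psd_def by auto

lemma quad_form_gram:
  fixes A :: "real mat"
  assumes "A \<in> carrier_mat m n" "v \<in> carrier_vec n"
  shows "v \<bullet> ((transpose_mat A * A) *\<^sub>v v) = (A *\<^sub>v v) \<bullet> (A *\<^sub>v v)"
  using quad_form_congruence[OF assms(1) one_carrier_mat assms(2)] assms by simp

lemma sym_psd_gram:
  fixes A :: "real mat"
  assumes "A \<in> carrier_mat m n"
  shows "sym_psd n (transpose_mat A * A)"
  using assms transpose_mult[of "transpose_mat A" n m A n] quad_form_gram[OF assms] scalar_prod_self_nonneg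
  unfolding sym_psd_def by auto

lemma gram_kernel_orthogonal:
  fixes A :: "real mat"
  assumes A: "A \<in> carrier_mat m n" and u: "u \<in> carrier_vec n" and w: "w \<in> carrier_vec m"
    and ker: "(transpose_mat A * A) *\<^sub>v u = 0\<^sub>v n"
  shows "u \<bullet> (transpose_mat A *\<^sub>v w) = 0"
proof -
  have "(A *\<^sub>v u) \<bullet> (A *\<^sub>v u) = 0" using quad_form_gram[OF A u] ker u by simp
  then have "A *\<^sub>v u = 0\<^sub>v m" using scalar_prod_self_eq_0_iff[of "A *\<^sub>v u" m] A u by simp
  then show ?thesis
    using transpose_vec_mult_scalar[OF A u w] comm_scalar_prod[OF u, of "transpose_mat A *\<^sub>v w"] A w by simp
qed

lemma finite_nonzero_eigenvalues:
  fixes A :: "real mat"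
  assumes A: "A \<in> carrier_mat n n"
  shows "finite {l. eigenvalue A l \<and> l \<noteq> 0}"
proof -
  have "char_poly A \<noteq> 0" using degree_monic_char_poly[OF A] by auto
  then have "finite {l. poly (char_poly A) l = 0}" by (rule poly_roots_finite)
  then show ?thesis by (rule finite_subset[rotated]) (use eigenvalue_root_char_poly[OF A] in auto)
qed

lemma lambda_min_plus_le:
  assumes "A \<in> carrier_mat n n" "eigenvalue A l" "l \<noteq> 0"
  shows "lambda_min_plus A \<le> l"
  unfolding lambda_min_plus_def using finite_nonzero_eigenvalues[OF assms(1)] assms(2,3) by simp

lemma lambda_min_plus_eigenvalue:
  assumes "A \<in> carrier_mat n n" "eigenvalue A l" "l \<noteq> 0"
  shows "eigenvalue A (lambda_min_plus A)" "lambda_min_plus A \<noteq> 0"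
  using Min_in[OF finite_nonzero_eigenvalues[OF assms(1)]] assms(2,3)
  unfolding lambda_min_plus_def by auto

lemma eigenvalue_mult_transpose_swap:
  fixes C :: "real mat"
  assumes C: "C \<in> carrier_mat n m" and ev: "eigenvalue (C * transpose_mat C) l" and l: "l \<noteq> 0"
  shows "eigenvalue (transpose_mat C * C) l"
proof -
  obtain w where w: "w \<in> carrier_vec n" "w \<noteq> 0\<^sub>v n" and Cw: "(C * transpose_mat C) *\<^sub>v w = l \<cdot>\<^sub>v w"
    using ev C unfolding eigenvalue_def eigenvector_def by auto
  define y where "y = transpose_mat C *\<^sub>v w"
  have y: "y \<in> carrier_vec m" unfolding y_def using C w by simp
  have Cy: "C *\<^sub>v y = l \<cdot>\<^sub>v w" using Cw C w unfolding y_def by simp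
  have "y \<noteq> 0\<^sub>v m"
  proof
    assume "y = 0\<^sub>v m"
    then have lw: "l \<cdot>\<^sub>v w = 0\<^sub>v n" using Cy C by simp
    have "w $ i = 0" if "i < n" for i
      using arg_cong[OF lw, of "\<lambda>v. v $ i"] that l w by simp
    then show False using w by (auto intro: eq_vecI)
  qed
  moreover have "(transpose_mat C * C) *\<^sub>v y = l \<cdot>\<^sub>v y"
    using C y w Cy mult_mat_vec[of "transpose_mat C" m n w l] unfolding y_def by simp
  ultimately show ?thesis using y C unfolding eigenvalue_def eigenvector_def by auto
qed

lemma transpose_mult_vec_nonzero:
  fixes C :: "'a :: semiring_1 mat"
  assumes C: "C \<in> carrier_mat n m" and C0: "C \<noteq> 0\<^sub>m n m"
  obtains v where "v \<in> carrier_vec n" "transpose_mat C *\<^sub>v v \<noteq> 0\<^sub>v m"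
proof -
  obtain i j where ij: "i < n" "j < m" "C $$ (i, j) \<noteq> 0"
    using C0 C by (metis carrier_matD eq_matI index_zero_mat)
  have "(transpose_mat C *\<^sub>v unit_vec n i) $ j \<noteq> 0" using ij C by simp
  then have "transpose_mat C *\<^sub>v unit_vec n i \<noteq> 0\<^sub>v m" using ij by auto
  then show thesis by (rule that[OF unit_vec_carrier])
qed

lemma sym_mat_eigenvector_orthogonal_kernel:
  fixes L :: "real mat"
  assumes L: "L \<in> carrier_mat n n" "transpose_mat L = L"
    and v: "v \<in> carrier_vec n" "L *\<^sub>v v = \<mu> \<cdot>\<^sub>v v" "\<mu> \<noteq> 0"
    and x: "x \<in> carrier_vec n" "L *\<^sub>v x = 0\<^sub>v n"
  shows "x \<bullet> v = 0"
proof -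
  have "\<mu> * (x \<bullet> v) = (L *\<^sub>v x) \<bullet> v"
    using sym_mat_scalar_prod_swap[OF L x(1) v(1)] v x by simp
  then show ?thesis using v x by simp
qed

lemma lambda_min_plus_gram_le:
  fixes C L :: "real mat"
  assumes C: "C \<in> carrier_mat n m" and L: "sym_psd n L" and c: "0 < c"
    and le: "\<And>v. v \<in> carrier_vec n \<Longrightarrow>
      (transpose_mat C *\<^sub>v v) \<bullet> (transpose_mat C *\<^sub>v v) \<le> c * (v \<bullet> (L *\<^sub>v v))"
    and ker: "\<And>x. x \<in> carrier_vec n \<Longrightarrow> transpose_mat C *\<^sub>v x = 0\<^sub>v m \<Longrightarrow> x \<bullet> (L *\<^sub>v x) = 0"
    and C0: "C \<noteq> 0\<^sub>m n m"
  shows "lambda_min_plus (transpose_mat C * C) / c \<le> lambda_min_plus L"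
proof -
  have Lc: "L \<in> carrier_mat n n" "transpose_mat L = L" using L unfolding sym_psd_def by auto
  have Ct: "transpose_mat C \<in> carrier_mat m n" using C by simp
  let ?K = "C * transpose_mat C"
  have K: "sym_psd n ?K" using sym_psd_gram[OF Ct] by simp
  have K_quad: "v \<bullet> (?K *\<^sub>v v) = (transpose_mat C *\<^sub>v v) \<bullet> (transpose_mat C *\<^sub>v v)"
    if "v \<in> carrier_vec n" for v
    using quad_form_gram[OF Ct that] by simp
  obtain u where u: "u \<in> carrier_vec n" "transpose_mat C *\<^sub>v u \<noteq> 0\<^sub>v m"
    using transpose_mult_vec_nonzero[OF C C0] .
  then have "0 < c * (u \<bullet> (L *\<^sub>v u))"
    using le[OF u(1)] scalar_prod_self_pos[OF mult_mat_vec_carrier[OF Ct u(1)]] by linarith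
  then have "u \<bullet> (L *\<^sub>v u) \<noteq> 0" by auto
  then obtain l where "eigenvalue L l" "l \<noteq> 0" using sym_mat_nonzero_eigenvalue[OF Lc u(1)] by blast
  note mu = lambda_min_plus_eigenvalue[OF Lc(1) this]
  define \<mu> where "\<mu> = lambda_min_plus L"
  obtain v where v: "v \<in> carrier_vec n" "v \<noteq> 0\<^sub>v n" and Lv: "L *\<^sub>v v = \<mu> \<cdot>\<^sub>v v"
    using mu(1) Lc unfolding eigenvalue_def eigenvector_def \<mu>_def by auto
  have "x \<bullet> v = 0" if x: "x \<in> carrier_vec n" and Kx: "?K *\<^sub>v x = 0\<^sub>v n" for x
  proof (rule sym_mat_eigenvector_orthogonal_kernel[OF Lc v(1) Lv _ x])
    have "transpose_mat C *\<^sub>v x = 0\<^sub>v m"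
      using K_quad[OF x] Kx x scalar_prod_self_eq_0_iff[of _ m] Ct by simp
    then show "L *\<^sub>v x = 0\<^sub>v n" using sym_psd_quad_form_eq_0D[OF L x] ker[OF x] by simp
  qed (use mu(2) \<mu>_def in simp)
  then obtain k where k: "eigenvalue ?K k" "0 < k" and k_le: "k * (v \<bullet> v) \<le> v \<bullet> (?K *\<^sub>v v)"
    using sym_psd_rayleigh[OF K v] by blast
  note k_le
  also have "v \<bullet> (?K *\<^sub>v v) \<le> c * \<mu> * (v \<bullet> v)" using le[OF v(1)] K_quad[OF v(1)] Lv v by simp
  finally have "k \<le> c * \<mu>" using scalar_prod_self_pos[OF v] by simp
  moreover have "lambda_min_plus (transpose_mat C * C) \<le> k"
    using eigenvalue_mult_transpose_swap[OF C k(1)] k(2) C by (intro lambda_min_plus_le) auto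
  ultimately show ?thesis using c unfolding \<mu>_def by (simp add: divide_le_eq mult.commute)
qed

lemma wsum_mat_carrier [simp]: "wsum_mat n m I w M \<in> carrier_mat n m"
  by (simp add: wsum_mat_def)

lemma wsum_mat_quad_form:
  assumes M: "\<And>i. i \<in> I \<Longrightarrow> M i \<in> carrier_mat n n" and v: "v \<in> carrier_vec n"
  shows "v \<bullet> (wsum_mat n n I w M *\<^sub>v v) = (\<Sum>i\<in>I. w i * (v \<bullet> (M i *\<^sub>v v)))"
proof -
  have "v \<bullet> (wsum_mat n n I w M *\<^sub>v v)
      = (\<Sum>j\<in>{0..<n}. \<Sum>k\<in>{0..<n}. \<Sum>i\<in>I. w i * (v $ j * M i $$ (j, k) * v $ k))"
    using v by (simp add: scalar_prod_def wsum_mat_def sum_distrib_left sum_distrib_right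
        mult.commute mult.left_commute)
  also have "\<dots> = (\<Sum>i\<in>I. w i * (\<Sum>j\<in>{0..<n}. \<Sum>k\<in>{0..<n}. v $ j * M i $$ (j, k) * v $ k))"
    by (simp add: sum_distrib_left sum.swap[of _ I])
  also have "\<dots> = (\<Sum>i\<in>I. w i * (v \<bullet> (M i *\<^sub>v v)))"
  proof (intro sum.cong refl)
    fix i assume "i \<in> I"
    then have "M i \<in> carrier_mat n n" by (rule M)
    then show "w i * (\<Sum>j\<in>{0..<n}. \<Sum>k\<in>{0..<n}. v $ j * M i $$ (j, k) * v $ k) = w i * (v \<bullet> (M i *\<^sub>v v))"
      using v by (simp add: scalar_prod_def sum_distrib_left mult.assoc)
  qed
  finally show ?thesis .
qed

lemma wsum_mat_cong:
  "(\<And>i. i \<in> I \<Longrightarrow> M i = M' i) \<Longrightarrow> wsum_mat n m I w M = wsum_mat n m I w M'"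
  unfolding wsum_mat_def by (intro cong_mat refl sum.cong) auto

lemma sym_psd_wsum_mat:
  assumes M: "\<And>i. i \<in> I \<Longrightarrow> sym_psd n (M i)" and w: "\<And>i. i \<in> I \<Longrightarrow> 0 \<le> w i"
  shows "sym_psd n (wsum_mat n n I w M)"
  unfolding sym_psd_def
proof (intro conjI ballI)
  have M_sym: "M i $$ (k, j) = M i $$ (j, k)" if "i \<in> I" "j < n" "k < n" for i j k
  proof -
    have Mc: "M i \<in> carrier_mat n n" and Ms: "transpose_mat (M i) = M i"
      using M[OF that(1)] unfolding sym_psd_def by auto
    have "M i $$ (k, j) = transpose_mat (M i) $$ (j, k)" using Mc that(2,3) by simp
    also have "\<dots> = M i $$ (j, k)" using Ms by simp
    finally show ?thesis .
  qed
  show "transpose_mat (wsum_mat n n I w M) = wsum_mat n n I w M"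
    by (rule eq_matI) (auto simp: wsum_mat_def M_sym intro!: sum.cong)
  fix v :: "real vec" assume "v \<in> carrier_vec n"
  then show "0 \<le> v \<bullet> (wsum_mat n n I w M *\<^sub>v v)"
    using M w unfolding wsum_mat_quad_form[OF _ \<open>v \<in> carrier_vec n\<close>]
    by (subst wsum_mat_quad_form) (auto simp: sym_psd_def intro!: sum_nonneg)
qed simp

lemma mult_wsum_mat:
  assumes A: "A \<in> carrier_mat n n" and M: "\<And>i. i \<in> I \<Longrightarrow> M i \<in> carrier_mat n n"
  shows "A * wsum_mat n n I w M = wsum_mat n n I w (\<lambda>i. A * M i)"
proof (rule eq_matI)
  fix j k assume "j < dim_row (wsum_mat n n I w (\<lambda>i. A * M i))" "k < dim_col (wsum_mat n n I w (\<lambda>i. A * M i))"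
  then have j: "j < n" and k: "k < n" by (simp_all add: wsum_mat_def)
  have "(A * wsum_mat n n I w M) $$ (j, k) = (\<Sum>l\<in>{0..<n}. \<Sum>i\<in>I. w i * (A $$ (j, l) * M i $$ (l, k)))"
    using A j k by (simp add: wsum_mat_def scalar_prod_def sum_distrib_left mult.left_commute)
  also have "\<dots> = (\<Sum>i\<in>I. \<Sum>l\<in>{0..<n}. w i * (A $$ (j, l) * M i $$ (l, k)))"
    by (rule sum.swap)
  also have "\<dots> = (\<Sum>i\<in>I. w i * (A * M i) $$ (j, k))"
  proof (intro sum.cong refl)
    fix i assume "i \<in> I"
    then have "M i \<in> carrier_mat n n" by (rule M)
    then show "(\<Sum>l\<in>{0..<n}. w i * (A $$ (j, l) * M i $$ (l, k))) = w i * (A * M i) $$ (j, k)"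
      using A j k by (simp add: scalar_prod_def sum_distrib_left)
  qed
  finally show "(A * wsum_mat n n I w M) $$ (j, k) = wsum_mat n n I w (\<lambda>i. A * M i) $$ (j, k)"
    using j k by (simp add: wsum_mat_def)
qed (use A in \<open>auto simp: wsum_mat_def\<close>)

lemma wsum_mat_mult:
  assumes A: "A \<in> carrier_mat n n" and M: "\<And>i. i \<in> I \<Longrightarrow> M i \<in> carrier_mat n n"
  shows "wsum_mat n n I w M * A = wsum_mat n n I w (\<lambda>i. M i * A)"
proof (rule eq_matI)
  fix j k assume "j < dim_row (wsum_mat n n I w (\<lambda>i. M i * A))" "k < dim_col (wsum_mat n n I w (\<lambda>i. M i * A))"
  then have j: "j < n" and k: "k < n" by (simp_all add: wsum_mat_def)
  have "(wsum_mat n n I w M * A) $$ (j, k) = (\<Sum>l\<in>{0..<n}. \<Sum>i\<in>I. w i * (M i $$ (j, l) * A $$ (l, k)))"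
    using A j k by (simp add: wsum_mat_def scalar_prod_def sum_distrib_right mult.assoc)
  also have "\<dots> = (\<Sum>i\<in>I. \<Sum>l\<in>{0..<n}. w i * (M i $$ (j, l) * A $$ (l, k)))"
    by (rule sum.swap)
  also have "\<dots> = (\<Sum>i\<in>I. w i * (M i * A) $$ (j, k))"
  proof (intro sum.cong refl)
    fix i assume "i \<in> I"
    then have "M i \<in> carrier_mat n n" by (rule M)
    then show "(\<Sum>l\<in>{0..<n}. w i * (M i $$ (j, l) * A $$ (l, k))) = w i * (M i * A) $$ (j, k)"
      using A j k by (simp add: scalar_prod_def sum_distrib_left)
  qed
  finally show "(wsum_mat n n I w M * A) $$ (j, k) = wsum_mat n n I w (\<lambda>i. M i * A) $$ (j, k)"
    using j k by (simp add: wsum_mat_def)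
qed (use A in \<open>auto simp: wsum_mat_def\<close>)

lemma append_cols_carrier:
  "A \<in> carrier_mat n a \<Longrightarrow> B \<in> carrier_mat n b \<Longrightarrow> append_cols A B \<in> carrier_mat n (a + b)"
  unfolding append_cols_def by auto

lemma col_append_cols:
  assumes "A \<in> carrier_mat n a" "B \<in> carrier_mat n b" "j < a + b"
  shows "col (append_cols A B) j = (if j < a then col A j else col B (j - a))"
  using assms unfolding append_cols_def by (auto intro!: eq_vecI)

lemma hcat_carrier:
  "(\<And>i. i < r \<Longrightarrow> S i \<in> carrier_mat n (q i)) \<Longrightarrow> hcat n S r \<in> carrier_mat n (\<Sum>i<r. q i)"
  by (induction r) (simp_all add: append_cols_carrier)

lemma transpose_mult_vec_norm:
  fixes M :: "real mat"
  assumes "M \<in> carrier_mat n c" "x \<in> carrier_vec n"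
  shows "(transpose_mat M *\<^sub>v x) \<bullet> (transpose_mat M *\<^sub>v x) = (\<Sum>j\<in>{0..<c}. (col M j \<bullet> x)\<^sup>2)"
  using assms by (auto simp: scalar_prod_def[of "transpose_mat M *\<^sub>v x"] power2_eq_square intro!: sum.cong)

lemma append_cols_transpose_norm:
  fixes A B :: "real mat"
  assumes A: "A \<in> carrier_mat n a" and B: "B \<in> carrier_mat n b" and x: "x \<in> carrier_vec n"
  shows "(transpose_mat (append_cols A B) *\<^sub>v x) \<bullet> (transpose_mat (append_cols A B) *\<^sub>v x)
    = (transpose_mat A *\<^sub>v x) \<bullet> (transpose_mat A *\<^sub>v x) + (transpose_mat B *\<^sub>v x) \<bullet> (transpose_mat B *\<^sub>v x)"
proof -
  let ?f = "\<lambda>j. (col (append_cols A B) j \<bullet> x)\<^sup>2"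
  have "(\<Sum>j\<in>{0..<a + b}. ?f j) = (\<Sum>j\<in>{0..<a}. ?f j) + (\<Sum>j\<in>{0..<b}. ?f (j + a))"
    using sum.atLeastLessThan_concat[of 0 a "a + b" ?f] sum.shift_bounds_nat_ivl[of ?f 0 a b]
    by (simp add: add.commute)
  also have "\<dots> = (\<Sum>j\<in>{0..<a}. (col A j \<bullet> x)\<^sup>2) + (\<Sum>j\<in>{0..<b}. (col B j \<bullet> x)\<^sup>2)"
    by (intro arg_cong2[where f = "(+)"] sum.cong) (auto simp: col_append_cols[OF A B])
  finally show ?thesis
    unfolding transpose_mult_vec_norm[OF append_cols_carrier[OF A B] x]
      transpose_mult_vec_norm[OF A x] transpose_mult_vec_norm[OF B x] .
qed

lemma hcat_transpose_norm:
  fixes S :: "nat \<Rightarrow> real mat"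
  assumes S: "\<And>i. i < r \<Longrightarrow> S i \<in> carrier_mat n (q i)" and x: "x \<in> carrier_vec n"
  shows "(transpose_mat (hcat n S r) *\<^sub>v x) \<bullet> (transpose_mat (hcat n S r) *\<^sub>v x)
     = (\<Sum>i<r. (transpose_mat (S i) *\<^sub>v x) \<bullet> (transpose_mat (S i) *\<^sub>v x))"
  using S
proof (induction r)
  case 0
  then show ?case by (simp add: scalar_prod_def)
next
  case (Suc r)
  then show ?case
    using append_cols_transpose_norm[OF hcat_carrier[of r S n q] _ x, of "S r" "q r"] by simp
qed

lemma hcat_transpose_eq_0:
  fixes S :: "nat \<Rightarrow> real mat"
  assumes S: "\<And>i. i < r \<Longrightarrow> S i \<in> carrier_mat n (q i)" and x: "x \<in> carrier_vec n"
    and ker: "transpose_mat (hcat n S r) *\<^sub>v x = 0\<^sub>v (\<Sum>i<r. q i)" and i: "i < r"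
  shows "transpose_mat (S i) *\<^sub>v x = 0\<^sub>v (q i)"
proof -
  have "(\<Sum>i<r. (transpose_mat (S i) *\<^sub>v x) \<bullet> (transpose_mat (S i) *\<^sub>v x)) = 0"
    using hcat_transpose_norm[of r S n q, OF S x] ker by simp
  then have "(transpose_mat (S i) *\<^sub>v x) \<bullet> (transpose_mat (S i) *\<^sub>v x) = 0"
    using i scalar_prod_self_nonneg by (subst (asm) sum_nonneg_eq_0_iff) auto
  then show ?thesis using scalar_prod_self_eq_0_iff[of _ "q i"] S[OF i] x by simp
qed

lemma mult_append_cols:
  assumes A: "A \<in> carrier_mat k n" and B: "B \<in> carrier_mat n a" and C: "C \<in> carrier_mat n b"
  shows "A * append_cols B C = append_cols (A * B) (A * C)"
proof (rule eq_matI)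
  fix i j assume "i < dim_row (append_cols (A * B) (A * C))" "j < dim_col (append_cols (A * B) (A * C))"
  then have i: "i < k" and j: "j < a + b" using A B C by (simp_all add: append_cols_def)
  then show "(A * append_cols B C) $$ (i, j) = append_cols (A * B) (A * C) $$ (i, j)"
    using A B C col_append_cols[OF B C j] by (simp add: append_cols_def)
qed (use A B C in \<open>simp_all add: append_cols_def\<close>)

lemma mult_hcat:
  assumes A: "A \<in> carrier_mat k n" and S: "\<And>i. i < r \<Longrightarrow> S i \<in> carrier_mat n (q i)"
  shows "A * hcat n S r = hcat k (\<lambda>i. A * S i) r"
  using S
proof (induction r)
  case 0
  then show ?case using A by simp
next
  case (Suc r)
  then show ?case
    using mult_append_cols[OF A hcat_carrier[of r S n q] Suc.prems[of r]] by simp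
qed

section \<open>The main estimate\<close>

lemma gram_norm_le_trace_pinv:
  fixes C :: "real mat"
  assumes C: "C \<in> carrier_mat n q" and v: "v \<in> carrier_vec n"
  shows "(transpose_mat C *\<^sub>v v) \<bullet> (transpose_mat C *\<^sub>v v)
    \<le> mat_trace (transpose_mat C * C) *
      ((transpose_mat C *\<^sub>v v) \<bullet> (pinv (transpose_mat C * C) *\<^sub>v (transpose_mat C *\<^sub>v v)))"
  using gram_kernel_orthogonal[OF C _ v] C v
  by (intro sym_psd_norm_le_trace_pinv[OF sym_psd_gram[OF C]]) auto

lemma sym_psd_projection:
  fixes C :: "real mat"
  assumes C: "C \<in> carrier_mat n q"
  shows "sym_psd n (C * pinv (transpose_mat C * C) * transpose_mat C)"
  using sym_psd_congruence[OF sym_psd_pinv[OF sym_psd_gram[OF C]], of "transpose_mat C" n] C by simp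

lemma quad_form_projection:
  fixes C :: "real mat"
  assumes C: "C \<in> carrier_mat n q" and v: "v \<in> carrier_vec n"
  shows "v \<bullet> ((C * pinv (transpose_mat C * C) * transpose_mat C) *\<^sub>v v)
    = (transpose_mat C *\<^sub>v v) \<bullet> (pinv (transpose_mat C * C) *\<^sub>v (transpose_mat C *\<^sub>v v))"
  using quad_form_congruence[of "transpose_mat C" q n "pinv (transpose_mat C * C)" v]
    sym_psd_pinv[OF sym_psd_gram[OF C]] C v unfolding sym_psd_def by simp

lemma pinv_gram_carrier:
  fixes C :: "real mat"
  assumes "C \<in> carrier_mat n q"
  shows "pinv (transpose_mat C * C) \<in> carrier_mat q q"
  using sym_psd_pinv[OF sym_psd_gram[OF assms]] unfolding sym_psd_def by blast

lemma sym_psd_weighted_projections: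
  fixes C :: "nat \<Rightarrow> real mat"
  assumes "\<And>i. i \<in> I \<Longrightarrow> C i \<in> carrier_mat n (q i)" and "\<And>i. i \<in> I \<Longrightarrow> 0 \<le> p i"
  shows "sym_psd n (wsum_mat n n I p (\<lambda>i. C i * pinv (transpose_mat (C i) * C i) * transpose_mat (C i)))"
  using assms by (auto intro!: sym_psd_wsum_mat sym_psd_projection)

lemma quad_form_weighted_projections:
  fixes C :: "nat \<Rightarrow> real mat"
  assumes C: "\<And>i. i \<in> I \<Longrightarrow> C i \<in> carrier_mat n (q i)" and v: "v \<in> carrier_vec n"
  shows "v \<bullet> (wsum_mat n n I p (\<lambda>i. C i * pinv (transpose_mat (C i) * C i) * transpose_mat (C i)) *\<^sub>v v)
    = (\<Sum>i\<in>I. p i * ((transpose_mat (C i) *\<^sub>v v) \<bullet>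
        (pinv (transpose_mat (C i) * C i) *\<^sub>v (transpose_mat (C i) *\<^sub>v v))))"
  using sym_psd_projection[OF C] quad_form_projection[OF C, of _ v] v
  by (subst wsum_mat_quad_form) (auto simp: sym_psd_def)

lemma quad_form_weighted_projections_eq_0:
  fixes C :: "nat \<Rightarrow> real mat"
  assumes C: "\<And>i. i \<in> I \<Longrightarrow> C i \<in> carrier_mat n (q i)" and x: "x \<in> carrier_vec n"
    and ker: "\<And>i. i \<in> I \<Longrightarrow> transpose_mat (C i) *\<^sub>v x = 0\<^sub>v (q i)"
  shows "x \<bullet> (wsum_mat n n I p (\<lambda>i. C i * pinv (transpose_mat (C i) * C i) * transpose_mat (C i)) *\<^sub>v x) = 0"
proof -
  have "x \<bullet> (wsum_mat n n I p (\<lambda>i. C i * pinv (transpose_mat (C i) * C i) * transpose_mat (C i)) *\<^sub>v x)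
    = (\<Sum>i\<in>I. p i * ((transpose_mat (C i) *\<^sub>v x) \<bullet>
        (pinv (transpose_mat (C i) * C i) *\<^sub>v (transpose_mat (C i) *\<^sub>v x))))"
    by (rule quad_form_weighted_projections) (use C x in auto)
  also have "\<dots> = 0"
  proof (rule sum.neutral, rule ballI)
    fix i assume i: "i \<in> I"
    have "pinv (transpose_mat (C i) * C i) *\<^sub>v (transpose_mat (C i) *\<^sub>v x) = 0\<^sub>v (q i)"
      unfolding ker[OF i] using pinv_gram_carrier[OF C[OF i]] by simp
    then show "p i * ((transpose_mat (C i) *\<^sub>v x) \<bullet>
        (pinv (transpose_mat (C i) * C i) *\<^sub>v (transpose_mat (C i) *\<^sub>v x))) = 0"
      using C[OF i] x by simp
  qed
  finally show ?thesis .
qed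

theorem lambda_min_plus_weighted_projections:
  fixes C :: "nat \<Rightarrow> real mat" and q :: "nat \<Rightarrow> nat" and p :: "nat \<Rightarrow> real"
  assumes C: "\<And>i. i < r \<Longrightarrow> C i \<in> carrier_mat n (q i)"
    and p_pos: "\<And>i. i < r \<Longrightarrow> 0 < p i" and p_sum: "(\<Sum>i<r. p i) = 1"
    and p_def: "\<And>i. i < r \<Longrightarrow> p i = mat_trace (transpose_mat (C i) * C i) /
      mat_trace (transpose_mat (hcat n C r) * hcat n C r)"
  shows "lambda_min_plus (transpose_mat (hcat n C r) * hcat n C r) /
      mat_trace (transpose_mat (hcat n C r) * hcat n C r)
    \<le> lambda_min_plus (wsum_mat n n {..<r} p (\<lambda>i. C i * pinv (transpose_mat (C i) * C i) * transpose_mat (C i)))"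
    (is "_ / ?T \<le> lambda_min_plus ?L")
proof -
  have "r \<noteq> 0"
  proof
    assume "r = 0"
    with p_sum show False by simp
  qed
  then have "0 \<le> mat_trace (transpose_mat (C 0) * C 0)" "0 < mat_trace (transpose_mat (C 0) * C 0) / ?T"
    using sym_psd_trace_nonneg[OF sym_psd_gram[OF C]] p_pos p_def by auto
  then have T: "0 < ?T" by (simp add: zero_less_divide_iff)
  show ?thesis
  proof (rule lambda_min_plus_gram_le[OF hcat_carrier[OF C] _ T])
    show "sym_psd n ?L" using C p_pos by (intro sym_psd_weighted_projections) (auto intro: less_imp_le)
  next
    fix v :: "real vec" assume v: "v \<in> carrier_vec n"
    have "(transpose_mat (hcat n C r) *\<^sub>v v) \<bullet> (transpose_mat (hcat n C r) *\<^sub>v v)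
      = (\<Sum>i<r. (transpose_mat (C i) *\<^sub>v v) \<bullet> (transpose_mat (C i) *\<^sub>v v))"
      by (rule hcat_transpose_norm[OF C v])
    also have "\<dots> \<le> (\<Sum>i<r. ?T * (p i * ((transpose_mat (C i) *\<^sub>v v) \<bullet>
        (pinv (transpose_mat (C i) * C i) *\<^sub>v (transpose_mat (C i) *\<^sub>v v)))))"
      using gram_norm_le_trace_pinv[OF C v] p_def T by (intro sum_mono) (simp add: mult.assoc)
    also have "\<dots> = ?T * (v \<bullet> (?L *\<^sub>v v))"
      unfolding sum_distrib_left[symmetric]
      by (subst quad_form_weighted_projections) (use C v in auto)
    finally show "(transpose_mat (hcat n C r) *\<^sub>v v) \<bullet> (transpose_mat (hcat n C r) *\<^sub>v v) \<le> ?T * (v \<bullet> (?L *\<^sub>v v))" .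
  next
    fix x :: "real vec" assume "x \<in> carrier_vec n" "transpose_mat (hcat n C r) *\<^sub>v x = 0\<^sub>v (\<Sum>i<r. q i)"
    then show "x \<bullet> (?L *\<^sub>v x) = 0"
      using hcat_transpose_eq_0[OF C] C by (intro quad_form_weighted_projections_eq_0) auto
  next
    show "hcat n C r \<noteq> 0\<^sub>m n (\<Sum>i<r. q i)" using T by (auto simp: mat_trace_def)
  qed
qed

lemma gram_sym_square:
  fixes G :: "'a :: comm_semiring_0 mat"
  assumes G: "G \<in> carrier_mat n n" "transpose_mat G = G" and S: "S \<in> carrier_mat n k"
  shows "transpose_mat S * (G * G) * S = transpose_mat (G * S) * (G * S)"
  using assms by (simp add: transpose_mult[OF G(1) S] assoc_mult_mat[of _ k n _ n _ k])

lemma sym_sandwich: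
  fixes G :: "'a :: comm_semiring_0 mat"
  assumes G: "G \<in> carrier_mat n n" "transpose_mat G = G" and S: "S \<in> carrier_mat n k"
    and X: "X \<in> carrier_mat k k"
  shows "G * (S * X * transpose_mat S) * G = (G * S) * X * transpose_mat (G * S)"
proof -
  have SX: "S * X \<in> carrier_mat n k" and St: "transpose_mat S \<in> carrier_mat k n" using S X by auto
  have "G * (S * X * transpose_mat S) * G = (G * (S * X)) * (transpose_mat S * G)"
    using assoc_mult_mat[OF G(1) SX St] assoc_mult_mat[OF mult_carrier_mat[OF G(1) SX] St G(1)] by simp
  also have "\<dots> = (G * S) * X * transpose_mat (G * S)"
    using assoc_mult_mat[OF G(1) S X] transpose_mult[OF G(1) S] G by simp
  finally show ?thesis .
qed

lemma sym_mult_wsum_projections: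
  fixes G :: "real mat"
  assumes G: "G \<in> carrier_mat n n" "transpose_mat G = G"
    and S: "\<And>i. i \<in> I \<Longrightarrow> S i \<in> carrier_mat n (q i)"
  shows "G * wsum_mat n n I p (\<lambda>i. S i * pinv (transpose_mat (S i) * (G * G) * S i) * transpose_mat (S i)) * G
    = wsum_mat n n I p (\<lambda>i. (G * S i) * pinv (transpose_mat (G * S i) * (G * S i)) * transpose_mat (G * S i))"
proof -
  have X: "pinv (transpose_mat (S i) * (G * G) * S i) \<in> carrier_mat (q i) (q i)" if "i \<in> I" for i
    using pinv_gram_carrier[of "G * S i" n "q i"] G S[OF that]
    unfolding gram_sym_square[OF G S[OF that]] by simp
  have P: "S i * pinv (transpose_mat (S i) * (G * G) * S i) * transpose_mat (S i) \<in> carrier_mat n n"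
    if "i \<in> I" for i
    using S[OF that] X[OF that] by (meson mult_carrier_mat transpose_carrier_mat)
  have "G * wsum_mat n n I p (\<lambda>i. S i * pinv (transpose_mat (S i) * (G * G) * S i) * transpose_mat (S i)) * G
    = wsum_mat n n I p (\<lambda>i. G * (S i * pinv (transpose_mat (S i) * (G * G) * S i) * transpose_mat (S i)) * G)"
    by (subst mult_wsum_mat[OF G(1) P], assumption, rule wsum_mat_mult[OF G(1)]) (use G(1) P in simp)
  also have "\<dots> = wsum_mat n n I p (\<lambda>i. (G * S i) * pinv (transpose_mat (G * S i) * (G * S i)) * transpose_mat (G * S i))"
    using sym_sandwich[OF G S X] gram_sym_square[OF G S] by (intro wsum_mat_cong) simp
  finally show ?thesis .
qed

theorem theorem5:
  fixes n r :: nat and G :: "real mat"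
    and S :: "nat \<Rightarrow> real mat" and q :: "nat \<Rightarrow> nat" and p :: "nat \<Rightarrow> real"
  assumes G: "sym_psd n G"
    and S: "\<And>i. i < r \<Longrightarrow> S i \<in> carrier_mat n (q i)"
    and p_pos: "\<And>i. i < r \<Longrightarrow> p i > 0"
    and p_sum: "(\<Sum>i<r. p i) = 1"
    and p_def: "\<And>i. i < r \<Longrightarrow>
       p i = mat_trace (transpose_mat (S i) * (G * G) * S i) /
             mat_trace (transpose_mat (hcat n S r) * (G * G) * hcat n S r)"
  shows "lambda_min_plus
           (G * wsum_mat n n {..<r} p
                 (\<lambda>i. S i * pinv (transpose_mat (S i) * (G * G) * S i) * transpose_mat (S i)) * G)
         \<ge> lambda_min_plus (transpose_mat (hcat n S r) * (G * G) * hcat n S r) /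
           mat_trace (transpose_mat (hcat n S r) * (G * G) * hcat n S r)"
proof -
  have G': "G \<in> carrier_mat n n" "transpose_mat G = G" using G unfolding sym_psd_def by auto
  have GS: "G * S i \<in> carrier_mat n (q i)" if "i < r" for i using G' S[OF that] by simp
  have "transpose_mat (hcat n S r) * (G * G) * hcat n S r
      = transpose_mat (hcat n (\<lambda>i. G * S i) r) * hcat n (\<lambda>i. G * S i) r"
    using gram_sym_square[OF G' hcat_carrier[OF S]] mult_hcat[OF G'(1) S] by simp
  moreover note sym_mult_wsum_projections[OF G', of "{..<r}" S q p] gram_sym_square[OF G' S]
  ultimately show ?thesis
    using lambda_min_plus_weighted_projections[OF GS p_pos p_sum] p_def S by simp
qed

end
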